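(* Let $A\in\mathfrak{B}_{n\times m}$ be a semi-canonical matrix with $r(A)=\langle x_1,\dots,x_n\rangle$ and $c(A)=\langle y_1,\dots,y_m\rangle$. Then there exist integers $s,t$ with $0\le s\le m$, $0\le t\le n$ such that $x_1=2^s-1$ and $y_1=2^t-1$.
   Context: $\mathfrak{B}_{n\times m}$ denotes the set of all $n\times m$ matrices with entries in $\{0,1\}$. For $A=[a_{ij}]\in\mathfrak{B}_{n\times m}$, $r(A)=\langle x_1,\dots,x_n\rangle$ with $x_i=\sum_{j=1}^m a_{ij}2^{m-j}$ and $c(A)=\langle y_1,\dots,y_m\rangle$ with $y_j=\sum_{i=1}^n a_{ij}2^{n-i}$. $A$ is semi-canonical if $x_1\le x_2\le\cdots\le x_n$ and $y_1\le y_2\le\cdots\le y_m$. *)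

theory Defs
  imports Main
begin

(* An n x m binary matrix is a function A :: nat => nat => nat, entries A i j for
   1 <= i <= n, 1 <= j <= m (1-based, as in the paper), each in {0,1}. *)
definition binary_matrix :: "nat \<Rightarrow> nat \<Rightarrow> (nat \<Rightarrow> nat \<Rightarrow> nat) \<Rightarrow> bool" where
  "binary_matrix n m A \<longleftrightarrow> (\<forall>i\<in>{1..n}. \<forall>j\<in>{1..m}. A i j \<in> {0, 1})"

definition row_val :: "nat \<Rightarrow> (nat \<Rightarrow> nat \<Rightarrow> nat) \<Rightarrow> nat \<Rightarrow> nat" where
  "row_val m A i = (\<Sum>j=1..m. A i j * 2 ^ (m - j))"

definition col_val :: "nat \<Rightarrow> (nat \<Rightarrow> nat \<Rightarrow> nat) \<Rightarrow> nat \<Rightarrow> nat" where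
  "col_val n A j = (\<Sum>i=1..n. A i j * 2 ^ (n - i))"

definition semi_canonical :: "nat \<Rightarrow> nat \<Rightarrow> (nat \<Rightarrow> nat \<Rightarrow> nat) \<Rightarrow> bool" where
  "semi_canonical n m A \<longleftrightarrow>
     (\<forall>i\<in>{1..n}. \<forall>i'\<in>{1..n}. i \<le> i' \<longrightarrow> row_val m A i \<le> row_val m A i') \<and>
     (\<forall>j\<in>{1..m}. \<forall>j'\<in>{1..m}. j \<le> j' \<longrightarrow> col_val n A j \<le> col_val n A j')"

end

theory Submission
  imports Defs
begin

text \<open>The first entry of a binary string is its leading digit, so it is monotone in the
  value of the string. In a semi-canonical matrix the columns are sorted by value, hence the
  first row is a nondecreasing 0/1 string \<open>0\<dots>01\<dots>1\<close>, whose value is \<open>2^s - 1\<close>;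
  symmetrically for the first column.\<close>

definition bin_value :: "nat \<Rightarrow> (nat \<Rightarrow> nat) \<Rightarrow> nat" where
  "bin_value m f = (\<Sum>j=1..m. f j * 2 ^ (m - j))"

lemma row_val_eq_bin_value: "row_val m A i = bin_value m (A i)"
  by (simp add: row_val_def bin_value_def)

lemma col_val_eq_bin_value: "col_val n A j = bin_value n (\<lambda>i. A i j)"
  by (simp add: col_val_def bin_value_def)

lemma bin_value_0 [simp]: "bin_value 0 f = 0"
  by (simp add: bin_value_def)

lemma bin_value_Suc: "bin_value (Suc m) f = f 1 * 2 ^ m + bin_value m (\<lambda>j. f (Suc j))"
proof -
  have "bin_value (Suc m) f = f 1 * 2 ^ m + (\<Sum>j=Suc 1..Suc m. f j * 2 ^ (Suc m - j))"
    unfolding bin_value_def by (simp add: sum.atLeast_Suc_atMost)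
  also have "(\<Sum>j=Suc 1..Suc m. f j * 2 ^ (Suc m - j)) = bin_value m (\<lambda>j. f (Suc j))"
    unfolding bin_value_def sum.shift_bounds_cl_Suc_ivl by simp
  finally show ?thesis .
qed

lemma bin_value_less_power:
  assumes "\<forall>j\<in>{1..m}. f j \<in> {0, 1}"
  shows "bin_value m f < 2 ^ m"
  using assms
proof (induction m arbitrary: f)
  case (Suc m)
  have "bin_value m (\<lambda>j. f (Suc j)) < 2 ^ m"
    using Suc.IH[of "\<lambda>j. f (Suc j)"] Suc.prems by auto
  moreover have "f 1 * 2 ^ m \<le> (2::nat) ^ m"
    using Suc.prems[rule_format, of 1] by auto
  ultimately show ?case
    by (simp only: bin_value_Suc power_Suc)
qed simp

lemma bin_value_all_ones:
  assumes "\<forall>j\<in>{1..m}. f j = 1"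
  shows "bin_value m f = 2 ^ m - 1"
  using assms
proof (induction m arbitrary: f)
  case (Suc m)
  then have "bin_value m (\<lambda>j. f (Suc j)) = 2 ^ m - 1" and "f 1 = 1"
    by auto
  then show ?case
    by (simp add: bin_value_Suc)
qed simp

lemma leading_digit_mono:
  assumes "\<forall>j\<in>{1..Suc m}. f j \<in> {0, 1}" and "\<forall>j\<in>{1..Suc m}. g j \<in> {0, 1}"
    and "bin_value (Suc m) f \<le> bin_value (Suc m) g"
  shows "f 1 \<le> g 1"
proof (rule ccontr)
  assume "\<not> f 1 \<le> g 1"
  then have "f 1 = 1" and "g 1 = 0"
    using assms(1)[rule_format, of 1] assms(2)[rule_format, of 1] by auto
  moreover have "bin_value m (\<lambda>j. g (Suc j)) < 2 ^ m"
    using assms(2) by (intro bin_value_less_power) auto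
  ultimately have "bin_value (Suc m) g < bin_value (Suc m) f"
    by (simp add: bin_value_Suc)
  with assms(3) show False
    by simp
qed

lemma bin_value_sorted_digits:
  assumes "\<forall>j\<in>{1..m}. f j \<in> {0, 1}"
    and "\<forall>j\<in>{1..m}. \<forall>j'\<in>{1..m}. j \<le> j' \<longrightarrow> f j \<le> f j'"
  shows "\<exists>s\<le>m. bin_value m f = 2 ^ s - 1"
  using assms
proof (induction m arbitrary: f)
  case (Suc m)
  show ?case
  proof (cases "f 1 = 0")
    case True
    obtain s where "s \<le> m" and "bin_value m (\<lambda>j. f (Suc j)) = 2 ^ s - 1"
      using Suc.IH[of "\<lambda>j. f (Suc j)"] Suc.prems by auto
    with True show ?thesis
      by (intro exI[of _ s]) (simp add: bin_value_Suc)
  next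
    case False
    have "f j = 1" if "j \<in> {1..Suc m}" for j
    proof -
      have "f 1 \<le> f j"
        using Suc.prems(2) that by auto
      with False show ?thesis
        using Suc.prems(1)[rule_format, OF that] by auto
    qed
    then show ?thesis
      using bin_value_all_ones by blast
  qed
qed simp

text \<open>Applied both to \<open>A\<close> and to its transpose.\<close>

lemma first_column_of_sorted_rows:
  assumes "m \<ge> 1"
    and binary: "\<forall>i\<in>{1..n}. \<forall>j\<in>{1..m}. R i j \<in> {0, 1}"
    and sorted: "\<forall>i\<in>{1..n}. \<forall>i'\<in>{1..n}. i \<le> i' \<longrightarrow> bin_value m (R i) \<le> bin_value m (R i')"
  shows "\<exists>t\<le>n. bin_value n (\<lambda>i. R i 1) = 2 ^ t - 1"
proof (rule bin_value_sorted_digits)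
  show "\<forall>i\<in>{1..n}. R i 1 \<in> {0, 1}"
    using binary \<open>m \<ge> 1\<close> by auto
  obtain p where p: "m = Suc p"
    using \<open>m \<ge> 1\<close> by (cases m) auto
  show "\<forall>i\<in>{1..n}. \<forall>i'\<in>{1..n}. i \<le> i' \<longrightarrow> R i 1 \<le> R i' 1"
  proof (intro ballI impI)
    fix i i' assume "i \<in> {1..n}" "i' \<in> {1..n}" "i \<le> i'"
    then show "R i 1 \<le> R i' 1"
      using binary sorted unfolding p by (intro leading_digit_mono) auto
  qed
qed

theorem corollary1:
  fixes n m :: nat and A :: "nat \<Rightarrow> nat \<Rightarrow> nat"
  assumes "n \<ge> 1" and "m \<ge> 1"
    and "binary_matrix n m A"
    and "semi_canonical n m A"
  shows "\<exists>s t :: nat. s \<le> m \<and> t \<le> n \<and>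
           row_val m A 1 = 2 ^ s - 1 \<and> col_val n A 1 = 2 ^ t - 1"
proof -
  have binary: "\<forall>i\<in>{1..n}. \<forall>j\<in>{1..m}. A i j \<in> {0, 1}"
    using assms(3) unfolding binary_matrix_def .
  have "\<exists>t\<le>n. col_val n A 1 = 2 ^ t - 1"
    using first_column_of_sorted_rows[of m n A] assms(2,4) binary
    unfolding semi_canonical_def row_val_eq_bin_value col_val_eq_bin_value by blast
  moreover have "\<exists>s\<le>m. row_val m A 1 = 2 ^ s - 1"
    using first_column_of_sorted_rows[of n m "\<lambda>j i. A i j"] assms(1,4) binary
    unfolding semi_canonical_def row_val_eq_bin_value col_val_eq_bin_value by blast
  ultimately show ?thesis
    by blast
qed

end
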